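(* Let $SI$ be a function assigning a real number $SI(S;X_1,X_2)$ to every joint distribution of finite-valued random variables $(S,X_1,X_2)$, and let $\overline{SI}(S;X_1,X_2):=\sup_{f} SI(f(S);X_1,X_2)$, the supremum being over all functions $f$ from the alphabet of $S$ to an arbitrary finite set. Then: (1) if $SI$ satisfies property $( * )$, then $\overline{SI}$ also satisfies property $( * )$; (2) if $SI$ is right monotonic, then $\overline{SI}$ is also right monotonic.
   Context: Property $( * )$ for a measure $M$: the value $M(S;X_1,X_2)$ depends only on the pair marginal distributions $P_{SX_1}$ and $P_{SX_2}$ of $(S,X_1)$ and $(S,X_2)$. Right monotonicity for a measure $M$: $M(S;X_1,X_2)\ge M(S;f_1(X_1),f_2(X_2))$ for all random variables $(S,X_1,X_2)$ and all functions $f_1,f_2$ on the alphabets of $X_1,X_2$. *)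

theory Defs
  imports "HOL-Probability.Probability"
begin

text \<open>Finite alphabets are encoded as finite subsets of nat; a joint distribution of
finite-valued random variables (S,X1,X2) is a pmf on nat \<times> nat \<times> nat with finite support.\<close>

type_synonym jdist = "(nat \<times> nat \<times> nat) pmf"

definition finite_dist :: "jdist \<Rightarrow> bool" where
  "finite_dist P \<longleftrightarrow> finite (set_pmf P)"

definition marg_SX1 :: "jdist \<Rightarrow> (nat \<times> nat) pmf" where
  "marg_SX1 P = map_pmf (\<lambda>(s, x1, x2). (s, x1)) P"

definition marg_SX2 :: "jdist \<Rightarrow> (nat \<times> nat) pmf" where
  "marg_SX2 P = map_pmf (\<lambda>(s, x1, x2). (s, x2)) P"

definition prop_star :: "(jdist \<Rightarrow> 'b) \<Rightarrow> bool" where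
  "prop_star M \<longleftrightarrow> (\<forall>P Q. finite_dist P \<longrightarrow> finite_dist Q \<longrightarrow>
      marg_SX1 P = marg_SX1 Q \<longrightarrow> marg_SX2 P = marg_SX2 Q \<longrightarrow> M P = M Q)"

definition right_monotonic :: "(jdist \<Rightarrow> 'b::order) \<Rightarrow> bool" where
  "right_monotonic M \<longleftrightarrow> (\<forall>P f1 f2. finite_dist P \<longrightarrow>
      M (map_pmf (\<lambda>(s, x1, x2). (s, f1 x1, f2 x2)) P) \<le> M P)"

text \<open>SIbar(S;X1,X2) = sup_f SI(f(S);X1,X2), valued in the extended reals
(the supremum may be infinite).\<close>
definition SIbar :: "(jdist \<Rightarrow> real) \<Rightarrow> jdist \<Rightarrow> ereal" where
  "SIbar SI P = (SUP f :: nat \<Rightarrow> nat. ereal (SI (map_pmf (\<lambda>(s, x1, x2). (f s, x1, x2)) P)))"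

end

theory Submission
  imports Defs
begin

text \<open>Coarsening the source commutes with taking the pair marginals and with processing
the targets, so every property of SI transfers termwise to each SI(f(S);X1,X2) and hence
to their supremum.\<close>

definition coarsen_source :: "(nat \<Rightarrow> nat) \<Rightarrow> jdist \<Rightarrow> jdist" where
  "coarsen_source f P = map_pmf (\<lambda>(s, x1, x2). (f s, x1, x2)) P"

definition process_targets :: "(nat \<Rightarrow> nat) \<Rightarrow> (nat \<Rightarrow> nat) \<Rightarrow> jdist \<Rightarrow> jdist" where
  "process_targets f1 f2 P = map_pmf (\<lambda>(s, x1, x2). (s, f1 x1, f2 x2)) P"

lemma finite_dist_coarsen_source: "finite_dist P \<Longrightarrow> finite_dist (coarsen_source f P)"
  by (simp add: coarsen_source_def finite_dist_def)

lemma marg_SX1_coarsen_source: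
  "marg_SX1 (coarsen_source f P) = map_pmf (\<lambda>(s, x). (f s, x)) (marg_SX1 P)"
  unfolding marg_SX1_def coarsen_source_def by (simp add: pmf.map_comp o_def case_prod_beta)

lemma marg_SX2_coarsen_source:
  "marg_SX2 (coarsen_source f P) = map_pmf (\<lambda>(s, x). (f s, x)) (marg_SX2 P)"
  unfolding marg_SX2_def coarsen_source_def by (simp add: pmf.map_comp o_def case_prod_beta)

lemma coarsen_source_process_targets:
  "coarsen_source f (process_targets f1 f2 P) = process_targets f1 f2 (coarsen_source f P)"
  unfolding coarsen_source_def process_targets_def by (simp add: pmf.map_comp o_def case_prod_beta)

lemma SIbar_eq_SUP_coarsen_source:
  "SIbar SI P = (SUP f. ereal (SI (coarsen_source f P)))"
  by (simp add: SIbar_def coarsen_source_def)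

lemma prop_star_SIbar:
  assumes "prop_star SI"
  shows "prop_star (SIbar SI)"
  unfolding prop_star_def
proof (intro allI impI)
  fix P Q
  assume P: "finite_dist P" and Q: "finite_dist Q"
    and "marg_SX1 P = marg_SX1 Q" "marg_SX2 P = marg_SX2 Q"
  then have "SI (coarsen_source f P) = SI (coarsen_source f Q)" for f
    using assms[unfolded prop_star_def, rule_format,
        OF finite_dist_coarsen_source[OF P] finite_dist_coarsen_source[OF Q]]
    by (simp add: marg_SX1_coarsen_source marg_SX2_coarsen_source)
  then show "SIbar SI P = SIbar SI Q"
    by (simp add: SIbar_eq_SUP_coarsen_source)
qed

lemma right_monotonic_SIbar:
  assumes "right_monotonic SI"
  shows "right_monotonic (SIbar SI)"
  unfolding right_monotonic_def process_targets_def[symmetric]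
proof (intro allI impI)
  fix P f1 f2
  assume P: "finite_dist P"
  have "SI (process_targets f1 f2 (coarsen_source f P)) \<le> SI (coarsen_source f P)" for f
    using assms[unfolded right_monotonic_def, rule_format, OF finite_dist_coarsen_source[OF P]]
    unfolding process_targets_def .
  then have "SI (coarsen_source f (process_targets f1 f2 P)) \<le> SI (coarsen_source f P)" for f
    by (simp only: coarsen_source_process_targets)
  then show "SIbar SI (process_targets f1 f2 P) \<le> SIbar SI P"
    unfolding SIbar_eq_SUP_coarsen_source by (intro SUP_mono) auto
qed

theorem lemma3:
  fixes SI :: "jdist \<Rightarrow> real"
  shows "(prop_star SI \<longrightarrow> prop_star (SIbar SI)) \<and>
         (right_monotonic SI \<longrightarrow> right_monotonic (SIbar SI))"
  using prop_star_SIbar right_monotonic_SIbar by blast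

end
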